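(* Let $p\in(0,1)$. Let $Y_1,Y_2,\dots$ be i.i.d. with $Y_i=1-\mathrm{Geo}(p)$, and let $\hat Y_1,\hat Y_2,\dots$ be independent random variables where, via an independent fair coin flip for each $i$, $\hat Y_i=Y_i$ on heads and $\hat Y_i=0$ on tails. Then for every fixed $a\in(0,1)$, as $m\to\infty$, $$\Pr[\hat Y_1+\dots+\hat Y_m\ge am]\ge(2g_L(a)-o(1))^{-m}.$$
   Context: $\mathrm{Geo}(p)$ has $\Pr[\mathrm{Geo}(p)=k]=(1-p)^kp$, $k\ge0$. For $a\in[0,1]$, $\phi(a)$ denotes the unique $s\in[a,1]$ with $p(1-p)(2-s)^2(s-a)-a(1-s)=0$ (for $a\in(0,1)$ one has $0<a<\phi(a)<1$). $g_L:(0,1)\to\mathbb{R}$ is defined by $g_L(a)=1/2$ if $p>1/2$ and $0<a<1-\frac1{2p}$, and otherwise $g_L(a)=\frac{\phi(a)-a}{\phi(a)}\left(\frac{(1-p)(2-\phi(a))}{1-\phi(a)}\right)^a$. *)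

theory Defs
  imports "HOL-Probability.Probability"
begin

definition phi :: "real \<Rightarrow> real \<Rightarrow> real" where
  "phi p a = (THE s. a \<le> s \<and> s \<le> 1 \<and> p * (1 - p) * (2 - s)^2 * (s - a) - a * (1 - s) = 0)"

definition gL :: "real \<Rightarrow> real \<Rightarrow> real" where
  "gL p a = (if p > 1/2 \<and> 0 < a \<and> a < 1 - 1 / (2 * p) then 1/2
     else (phi p a - a) / phi p a * (((1 - p) * (2 - phi p a)) / (1 - phi p a)) powr a)"

definition Y_pmf :: "real \<Rightarrow> int pmf" where
  "Y_pmf p = map_pmf (\<lambda>k. 1 - int k) (geometric_pmf p)"

definition Yhat_pmf :: "real \<Rightarrow> int pmf" where
  "Yhat_pmf p = bind_pmf (bernoulli_pmf (1/2)) (\<lambda>heads. if heads then Y_pmf p else return_pmf 0)"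

fun Yhat_sum_pmf :: "real \<Rightarrow> nat \<Rightarrow> int pmf" where
  "Yhat_sum_pmf p 0 = return_pmf 0"
| "Yhat_sum_pmf p (Suc m) =
     bind_pmf (Yhat_sum_pmf p m) (\<lambda>s. map_pmf (\<lambda>y. s + y) (Yhat_pmf p))"

end

theory Submission
  imports Defs "HOL-Real_Asymp.Real_Asymp"
begin

text \<open>Conditioning on the number \<open>h\<close> of heads, \<open>Y\<^sub>1 + \<dots> + Y\<^sub>h = h - NB(h, p)\<close>, so
  \<open>Pr[\<Sum> Yhat\<^sub>i \<ge> am] \<ge> Pr[Bin(m, 1/2) = h] Pr[NB(h, p) = n]\<close> whenever \<open>h - n \<ge> am\<close>.
  Bounding binomial coefficients below by \<open>exp (n H(k/n)) / (n + 1)\<close> and choosing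
  \<open>h \<approx> bm\<close>, \<open>n \<approx> cm\<close> gives the rate \<open>exp (- log_rate p b c)\<close>. The value \<open>2 g\<^sub>L(a)\<close> is
  attained at \<open>b = 1/2\<close>, \<open>c = (1 - p)/(2p)\<close> (rate 1) when \<open>a < 1 - 1/(2p)\<close>, and otherwise at
  \<open>b = a/\<phi>(a)\<close>, \<open>c = b - a\<close>, where the equation defining \<open>\<phi>(a)\<close> makes the logarithms collapse
  to \<open>g\<^sub>L\<close>.\<close>

lemma neg_binomial_pmf_Suc_bind:
  "neg_binomial_pmf (Suc h) p =
     bind_pmf (neg_binomial_pmf h p) (\<lambda>y. map_pmf (\<lambda>x. x + y) (geometric_pmf p))"
  unfolding neg_binomial_pmf_Suc pair_pmf_def
  by (subst bind_commute_pmf) (simp add: map_pmf_def bind_assoc_pmf bind_return_pmf)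

lemma neg_binomial_shift_add_Yhat_pmf:
  "bind_pmf (neg_binomial_pmf h p) (\<lambda>n. map_pmf (\<lambda>y. (int h - int n) + y) (Yhat_pmf p)) =
   bind_pmf (bernoulli_pmf (1/2)) (\<lambda>b. let h' = h + of_bool b in
     map_pmf (\<lambda>n. int h' - int n) (neg_binomial_pmf h' p))"
proof -
  have "bind_pmf (neg_binomial_pmf h p) (\<lambda>n. map_pmf (\<lambda>y. (int h - int n) + y) (Yhat_pmf p)) =
    bind_pmf (bernoulli_pmf (1/2)) (\<lambda>b. bind_pmf (neg_binomial_pmf h p) (\<lambda>n.
       if b then map_pmf (\<lambda>k. int h - int n + (1 - int k)) (geometric_pmf p)
       else return_pmf (int h - int n)))"
    unfolding Yhat_pmf_def Y_pmf_def map_bind_pmf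
    by (subst bind_commute_pmf) (simp add: if_distrib map_pmf_comp cong: if_cong)
  also have "\<dots> = bind_pmf (bernoulli_pmf (1/2)) (\<lambda>b. let h' = h + of_bool b in
     map_pmf (\<lambda>n. int h' - int n) (neg_binomial_pmf h' p))"
    by (intro bind_pmf_cong refl)
       (auto simp: neg_binomial_pmf_Suc_bind map_bind_pmf map_pmf_comp algebra_simps
             simp flip: map_pmf_def)
  finally show ?thesis .
qed

lemma Yhat_sum_pmf_eq_mixture:
  "Yhat_sum_pmf p m = bind_pmf (binomial_pmf m (1/2))
     (\<lambda>h. map_pmf (\<lambda>n. int h - int n) (neg_binomial_pmf h p))"
proof (induction m)
  case 0
  then show ?case by (simp add: binomial_pmf_0 bind_return_pmf)
next
  case (Suc m)
  have "Yhat_sum_pmf p (Suc m) = bind_pmf (binomial_pmf m (1/2)) (\<lambda>h.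
     bind_pmf (neg_binomial_pmf h p) (\<lambda>n. map_pmf (\<lambda>y. (int h - int n) + y) (Yhat_pmf p)))"
    by (simp add: Suc bind_assoc_pmf bind_map_pmf)
  also have "\<dots> = bind_pmf (bernoulli_pmf (1/2)) (\<lambda>b. bind_pmf (binomial_pmf m (1/2)) (\<lambda>h.
     let h' = h + of_bool b in map_pmf (\<lambda>n. int h' - int n) (neg_binomial_pmf h' p)))"
    unfolding neg_binomial_shift_add_Yhat_pmf by (rule bind_commute_pmf)
  also have "\<dots> = bind_pmf (binomial_pmf (Suc m) (1/2))
     (\<lambda>h. map_pmf (\<lambda>n. int h - int n) (neg_binomial_pmf h p))"
    by (subst binomial_pmf_Suc) (auto simp: bind_assoc_pmf bind_return_pmf add.commute of_bool_def)
  finally show ?case .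
qed

lemma pmf_Yhat_sum_pmf_ge:
  assumes "h \<le> m"
  shows "pmf (binomial_pmf m (1/2)) h * pmf (neg_binomial_pmf h p) n
     \<le> pmf (Yhat_sum_pmf p m) (int h - int n)"
proof -
  let ?G = "\<lambda>h. map_pmf (\<lambda>n. int h - int n) (neg_binomial_pmf h p)"
  have "pmf (binomial_pmf m (1/2)) h * pmf (neg_binomial_pmf h p) n =
        pmf (?G h) (int h - int n) * pmf (binomial_pmf m (1/2)) h"
    by (subst pmf_map_inj') (auto simp: inj_on_def)
  also have "\<dots> \<le> (\<Sum>h'\<le>m. pmf (?G h') (int h - int n) * pmf (binomial_pmf m (1/2)) h')"
    by (rule member_le_sum) (use assms in auto)
  also have "\<dots> = pmf (Yhat_sum_pmf p m) (int h - int n)"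
    unfolding Yhat_sum_pmf_eq_mixture pmf_bind
    by (subst integral_measure_pmf_real[where A="{..m}"]) auto
  finally show ?thesis .
qed

text \<open>The \<open>j\<close>-th term of the binomial expansion of \<open>(k + (n - k))\<^sup>n\<close>.\<close>
definition binomial_term :: "nat \<Rightarrow> nat \<Rightarrow> nat \<Rightarrow> real" where
  "binomial_term n k j = real (n choose j) * real k ^ j * real (n - k) ^ (n - j)"

lemma binomial_term_Suc:
  assumes "j < n"
  shows "binomial_term n k (Suc j) * (real (Suc j) * real (n - k))
    = binomial_term n k j * (real (n - j) * real k)"
proof -
  have "real (Suc j) * real (n choose Suc j) = real (n - j) * real (n choose j)"
    using binomial_absorption[of j n] binomial_absorb_comp[of n j] by (metis of_nat_mult)
  moreover have "real (n - k) ^ (n - j) = real (n - k) ^ (n - Suc j) * real (n - k)"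
    using assms by (metis Suc_diff_Suc power_Suc2)
  ultimately show ?thesis
    unfolding binomial_term_def by (simp add: mult_ac)
qed

lemma binomial_term_le_mode:
  assumes "k \<le> n" "j \<le> n"
  shows "binomial_term n k j \<le> binomial_term n k k"
proof -
  let ?t = "binomial_term n k"
  have nonneg: "?t j \<ge> 0" for j
    unfolding binomial_term_def by simp
  have up: "?t j \<le> ?t (Suc j)" if "j < k" for j
  proof (cases "k = n")
    case True
    then have "?t j = 0"
      using that by (simp add: binomial_term_def)
    then show ?thesis using nonneg by simp
  next
    case False
    have "real (Suc j) * real (n - k) \<le> real (n - j) * real k"
      using that by (metis diff_le_mono2 less_eq_Suc_le mult.commute mult_le_mono
          of_nat_le_iff of_nat_mult order_less_le)
    then have "?t j * (real (Suc j) * real (n - k)) \<le> ?t (Suc j) * (real (Suc j) * real (n - k))"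
      using binomial_term_Suc[of j n k] that assms by (simp add: mult_left_mono nonneg)
    then show ?thesis using False assms by (simp add: mult_le_cancel_right)
  qed
  have down: "?t (Suc j) \<le> ?t j" if "k \<le> j" "j < n" for j
  proof -
    have "real (n - j) * real k \<le> real (Suc j) * real (n - k)"
      using that by (metis diff_le_mono2 le_Suc_eq mult_le_mono mult_of_nat_commute
          of_nat_le_iff of_nat_mult)
    then have "?t (Suc j) * (real (Suc j) * real (n - k)) \<le> ?t j * (real (Suc j) * real (n - k))"
      using binomial_term_Suc[of j n k] that by (simp add: mult_left_mono nonneg)
    then show ?thesis using that by (simp add: mult_le_cancel_right)
  qed
  show ?thesis
  proof (cases "j \<le> k")
    case True
    then show ?thesis
      by (induction j rule: inc_induct) (auto intro: order.trans[OF up])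
  next
    case False
    then have "k \<le> j" by simp
    then show ?thesis
      using assms(2) by (induction j rule: dec_induct) (auto intro: order.trans[OF down])
  qed
qed

lemma binomial_central_term_bound:
  assumes "k \<le> n"
  shows "real n ^ n \<le> real (n + 1) * (real (n choose k) * real k ^ k * real (n - k) ^ (n - k))"
proof -
  have "real n ^ n = (real k + real (n - k)) ^ n"
    using assms by simp
  also have "\<dots> = (\<Sum>j\<le>n. binomial_term n k j)"
    unfolding binomial_ring binomial_term_def by simp
  also have "\<dots> \<le> (\<Sum>j\<le>n. binomial_term n k k)"
    using assms by (intro sum_mono binomial_term_le_mode) simp_all
  finally show ?thesis by (simp add: binomial_term_def)
qed

text \<open>\<open>binomial_entropy n k = n H(k/n)\<close> for the natural-log entropy \<open>H\<close>; the convention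
  \<open>0 ln 0 = 0\<close> holds because \<open>ln 0 = 0\<close>.\<close>
definition binomial_entropy :: "nat \<Rightarrow> nat \<Rightarrow> real" where
  "binomial_entropy n k =
     real n * ln (real n) - real k * ln (real k) - real (n - k) * ln (real (n - k))"

lemma exp_nat_mult_ln_nat: "exp (real n * ln (real n)) = real n ^ n"
  by (cases "n = 0") (simp_all add: exp_of_nat_mult)

lemma binomial_ge_exp_binomial_entropy:
  assumes "k \<le> n"
  shows "exp (binomial_entropy n k) / real (n + 1) \<le> real (n choose k)"
proof -
  have pos: "real k ^ k * real (n - k) ^ (n - k) > 0"
    by (intro mult_pos_pos) (cases "k = 0"; cases "n - k = 0"; simp)+
  have "exp (binomial_entropy n k) = real n ^ n / (real k ^ k * real (n - k) ^ (n - k))"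
    unfolding binomial_entropy_def by (simp add: exp_diff exp_nat_mult_ln_nat)
  also have "\<dots> \<le> real (n + 1) * real (n choose k)"
    using binomial_central_term_bound[OF assms] pos by (simp add: divide_le_eq mult_ac)
  finally show ?thesis by (simp add: divide_le_eq mult_ac)
qed

lemma pmf_binomial_half_ge:
  assumes "h \<le> m"
  shows "exp (binomial_entropy m h) / (real (m + 1) * 2 ^ m) \<le> pmf (binomial_pmf m (1/2)) h"
proof -
  have "exp (binomial_entropy m h) / (real (m + 1) * 2 ^ m) \<le> real (m choose h) / 2 ^ m"
    using binomial_ge_exp_binomial_entropy[OF assms] by (simp add: divide_right_mono flip: divide_divide_eq_left)
  also have "\<dots> = pmf (binomial_pmf m (1/2)) h"
    using assms by (simp add: power_add [symmetric] power_divide)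
  finally show ?thesis .
qed

lemma pmf_neg_binomial_ge:
  assumes "0 < p" "p \<le> 1" "h \<ge> 1"
  shows "exp (binomial_entropy (n + h - 1) n) / real (n + h) * p ^ h * (1 - p) ^ n
     \<le> pmf (neg_binomial_pmf h p) n"
proof -
  have "exp (binomial_entropy (n + h - 1) n) / real (n + h) \<le> real ((n + h - 1) choose n)"
    using binomial_ge_exp_binomial_entropy[of n "n + h - 1"] assms by simp
  then have "exp (binomial_entropy (n + h - 1) n) / real (n + h) * p ^ h * (1 - p) ^ n
      \<le> real ((n + h - 1) choose n) * p ^ h * (1 - p) ^ n"
    using assms by (intro mult_right_mono) auto
  then show ?thesis
    using assms by (simp add: pmf_neg_binomial)
qed

definition xlnx :: "real \<Rightarrow> real" where
  "xlnx t = t * ln t"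

lemma isCont_xlnx: "t > 0 \<Longrightarrow> isCont xlnx t"
  unfolding xlnx_def by (intro continuous_intros) auto

lemma binomial_entropy_div:
  assumes "m > 0" "k \<le> n"
  shows "binomial_entropy n k / m
    = xlnx (real n / m) - xlnx (real k / m) - xlnx (real (n - k) / m)"
proof -
  have xlnx_div: "xlnx (x / m) = (x * ln x - x * ln m) / m" if "x \<ge> 0" for x
    using that assms by (cases "x = 0") (simp_all add: xlnx_def ln_div field_simps)
  show ?thesis
    unfolding binomial_entropy_def using assms by (simp add: xlnx_div field_simps)
qed

lemma tendsto_div_real_of_bounded_dev:
  fixes x :: "nat \<Rightarrow> real"
  assumes "\<forall>\<^sub>F m in sequentially. \<bar>x m - c * real m\<bar> \<le> C"
  shows "(\<lambda>m. x m / real m) \<longlonglongrightarrow> c"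
proof -
  have "(\<lambda>m. (x m - c * real m) / real m) \<longlonglongrightarrow> 0"
  proof (rule Lim_null_comparison)
    show "\<forall>\<^sub>F m in sequentially. norm ((x m - c * real m) / real m) \<le> C / real m"
      using assms by eventually_elim (simp add: divide_right_mono)
    show "(\<lambda>m. C / real m) \<longlonglongrightarrow> 0" by real_asymp
  qed
  then have "(\<lambda>m. (x m - c * real m) / real m + c) \<longlonglongrightarrow> 0 + c"
    by (intro tendsto_add tendsto_const)
  moreover have "\<forall>\<^sub>F m in sequentially. (x m - c * real m) / real m + c = x m / real m"
    using eventually_gt_at_top[of 0] by eventually_elim (simp add: field_simps)
  ultimately show ?thesis
    by (simp add: tendsto_cong)
qed

lemma binomial_entropy_rate:
  assumes "\<forall>\<^sub>F m in sequentially. k m \<le> n m"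
    and k: "(\<lambda>m. real (k m) / real m) \<longlonglongrightarrow> \<kappa>"
    and n: "(\<lambda>m. real (n m) / real m) \<longlonglongrightarrow> \<nu>"
    and "0 < \<kappa>" "\<kappa> < \<nu>"
  shows "(\<lambda>m. binomial_entropy (n m) (k m) / real m) \<longlonglongrightarrow> xlnx \<nu> - xlnx \<kappa> - xlnx (\<nu> - \<kappa>)"
proof -
  have "(\<lambda>m. xlnx (real (n m) / m) - xlnx (real (k m) / m) - xlnx (real (n m) / m - real (k m) / m))
      \<longlonglongrightarrow> xlnx \<nu> - xlnx \<kappa> - xlnx (\<nu> - \<kappa>)"
    using assms by (intro tendsto_intros isCont_tendsto_compose[OF isCont_xlnx]) auto
  moreover have "\<forall>\<^sub>F m in sequentially.
      xlnx (real (n m) / m) - xlnx (real (k m) / m) - xlnx (real (n m) / m - real (k m) / m)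
      = binomial_entropy (n m) (k m) / real m"
    using assms(1) eventually_gt_at_top[of 0]
    by eventually_elim (simp add: binomial_entropy_div of_nat_diff diff_divide_distrib)
  ultimately show ?thesis
    by (simp add: tendsto_cong)
qed

lemma exponential_rate_lower_bound:
  assumes "\<forall>\<^sub>F m in sequentially. 0 < f m \<and> f m \<le> g m"
    and "(\<lambda>m. ln (f m) / real m) \<longlonglongrightarrow> L"
  shows "\<exists>X. X \<longlonglongrightarrow> exp (- L) \<and> (\<forall>\<^sub>F m in sequentially. inverse (X m ^ m) \<le> g m)"
proof (intro exI conjI)
  show "(\<lambda>m. exp (- (ln (f m) / real m))) \<longlonglongrightarrow> exp (- L)"
    by (intro tendsto_intros assms)
  show "\<forall>\<^sub>F m in sequentially. inverse (exp (- (ln (f m) / real m)) ^ m) \<le> g m"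
    using assms(1) eventually_gt_at_top[of 0]
    by eventually_elim (simp add: exp_minus power_inverse flip: exp_of_nat_mult)
qed

lemma tendsto_ln_div_real_zero:
  fixes x :: "nat \<Rightarrow> real"
  assumes "\<forall>\<^sub>F m in sequentially. 1 \<le> x m \<and> x m \<le> 2 * real m"
  shows "(\<lambda>m. ln (x m) / real m) \<longlonglongrightarrow> 0"
proof (rule tendsto_sandwich)
  show "\<forall>\<^sub>F m in sequentially. 0 \<le> ln (x m) / real m"
    using assms by eventually_elim simp
  show "\<forall>\<^sub>F m in sequentially. ln (x m) / real m \<le> ln (2 * real m) / real m"
    using assms by eventually_elim (simp add: divide_right_mono)
  show "(\<lambda>m. ln (2 * real m) / real m) \<longlonglongrightarrow> 0"
    by real_asymp
qed simp

lemma real_nat_ceiling_bounds: "0 \<le> x \<Longrightarrow> x \<le> real (nat \<lceil>x\<rceil>) \<and> real (nat \<lceil>x\<rceil>) \<le> x + 1"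
  using of_int_ceiling_le_add_one[of x] by (simp add: of_nat_nat)

lemma real_nat_floor_bounds: "0 \<le> x \<Longrightarrow> x - 1 \<le> real (nat \<lfloor>x\<rfloor>) \<and> real (nat \<lfloor>x\<rfloor>) \<le> x"
  by (simp add: of_nat_nat)

text \<open>The exponential rate of \<open>Pr[Bin(m, 1/2) = bm] Pr[NB(bm, p) = cm]\<close>.\<close>
definition log_rate :: "real \<Rightarrow> real \<Rightarrow> real \<Rightarrow> real" where
  "log_rate p b c = - xlnx b - xlnx (1 - b) + (xlnx (b + c) - xlnx c - xlnx b)
     - ln 2 + b * ln p + c * ln (1 - p)"

definition entropy_lower_bound :: "real \<Rightarrow> nat \<Rightarrow> nat \<Rightarrow> nat \<Rightarrow> real" where
  "entropy_lower_bound p m h n = exp (binomial_entropy m h) / (real (m + 1) * 2 ^ m)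
     * (exp (binomial_entropy (n + h - 1) n) / real (n + h) * p ^ h * (1 - p) ^ n)"

lemma entropy_lower_bound_le_prob_Yhat_sum:
  assumes "0 < p" "p < 1" "1 \<le> h" "h \<le> m" "a * real m \<le> real h - real n"
  shows "entropy_lower_bound p m h n
    \<le> measure_pmf.prob (Yhat_sum_pmf p m) {x. real_of_int x \<ge> a * real m}"
proof -
  have "entropy_lower_bound p m h n
      \<le> pmf (binomial_pmf m (1/2)) h * pmf (neg_binomial_pmf h p) n"
    unfolding entropy_lower_bound_def using assms
    by (intro mult_mono pmf_binomial_half_ge pmf_neg_binomial_ge) auto
  also have "\<dots> \<le> pmf (Yhat_sum_pmf p m) (int h - int n)"
    by (rule pmf_Yhat_sum_pmf_ge) fact
  also have "\<dots> \<le> measure_pmf.prob (Yhat_sum_pmf p m) {x. real_of_int x \<ge> a * real m}"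
    unfolding measure_pmf_single[symmetric] using assms(5)
    by (intro measure_pmf.finite_measure_mono) auto
  finally show ?thesis .
qed

lemma entropy_lower_bound_pos:
  "0 < p \<Longrightarrow> p < 1 \<Longrightarrow> 1 \<le> h \<Longrightarrow> entropy_lower_bound p m h n > 0"
  unfolding entropy_lower_bound_def by (simp add: add_pos_nonneg)

lemma ln_entropy_lower_bound:
  assumes "0 < p" "p < 1" "1 \<le> h"
  shows "ln (entropy_lower_bound p m h n) = binomial_entropy m h - ln (real (m + 1)) - real m * ln 2
      + binomial_entropy (n + h - 1) n - ln (real (n + h)) + real h * ln p + real n * ln (1 - p)"
  unfolding entropy_lower_bound_def using assms
  by (simp add: ln_mult ln_div ln_realpow del: of_nat_add)

lemma entropy_lower_bound_rate:
  assumes p: "0 < p" "p < 1" and b: "0 < b" "b < 1" and "0 < c"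
    and h: "(\<lambda>m. real (h m) / real m) \<longlonglongrightarrow> b"
    and n: "(\<lambda>m. real (n m) / real m) \<longlonglongrightarrow> c"
    and ev: "\<forall>\<^sub>F m in sequentially. 1 \<le> h m \<and> h m \<le> m \<and> n m \<le> m"
  shows "(\<lambda>m. ln (entropy_lower_bound p m (h m) (n m)) / real m) \<longlonglongrightarrow> log_rate p b c"
proof -
  have ev': "\<forall>\<^sub>F m in sequentially. 0 < m \<and> 1 \<le> h m \<and> h m \<le> m \<and> n m \<le> m"
    using ev eventually_gt_at_top[of 0] by eventually_elim simp
  have one: "(\<lambda>m. real m / real m) \<longlonglongrightarrow> 1"
    by (rule tendsto_eventually) (use eventually_gt_at_top[of 0] in \<open>eventually_elim, simp\<close>)
  have nh: "(\<lambda>m. real (n m + h m - 1) / real m) \<longlonglongrightarrow> c + b - 0"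
  proof (rule Lim_transform_eventually)
    show "(\<lambda>m. real (n m) / real m + real (h m) / real m - 1 / real m) \<longlonglongrightarrow> c + b - 0"
      by (intro tendsto_intros h n)
    show "\<forall>\<^sub>F m in sequentially.
        real (n m) / real m + real (h m) / real m - 1 / real m = real (n m + h m - 1) / real m"
      using ev by eventually_elim (simp add: of_nat_diff add_divide_distrib diff_divide_distrib)
  qed
  have "(\<lambda>m. binomial_entropy m (h m) / real m + binomial_entropy (n m + h m - 1) (n m) / real m
      - ln 2 + real (h m) / real m * ln p + real (n m) / real m * ln (1 - p)
      - (ln (real (m + 1)) / real m + ln (real (n m + h m)) / real m))
    \<longlonglongrightarrow> (xlnx 1 - xlnx b - xlnx (1 - b)) + (xlnx (c + b - 0) - xlnx c - xlnx (c + b - 0 - c))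
      - ln 2 + b * ln p + c * ln (1 - p) - (0 + 0)"
  proof (intro tendsto_intros h n)
    show "(\<lambda>m. binomial_entropy m (h m) / real m) \<longlonglongrightarrow> xlnx 1 - xlnx b - xlnx (1 - b)"
      using ev b by (intro binomial_entropy_rate h one) (auto elim: eventually_mono)
    show "(\<lambda>m. binomial_entropy (n m + h m - 1) (n m) / real m)
        \<longlonglongrightarrow> xlnx (c + b - 0) - xlnx c - xlnx (c + b - 0 - c)"
      using ev b \<open>0 < c\<close> by (intro binomial_entropy_rate n nh) (auto elim: eventually_mono)
    show "(\<lambda>m. ln (real (m + 1)) / real m) \<longlonglongrightarrow> 0"
      using ev' by (intro tendsto_ln_div_real_zero) (auto elim: eventually_mono)
    show "(\<lambda>m. ln (real (n m + h m)) / real m) \<longlonglongrightarrow> 0"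
      using ev' by (intro tendsto_ln_div_real_zero) (auto elim: eventually_mono)
  qed
  moreover have "\<forall>\<^sub>F m in sequentially.
      binomial_entropy m (h m) / real m + binomial_entropy (n m + h m - 1) (n m) / real m
      - ln 2 + real (h m) / real m * ln p + real (n m) / real m * ln (1 - p)
      - (ln (real (m + 1)) / real m + ln (real (n m + h m)) / real m)
      = ln (entropy_lower_bound p m (h m) (n m)) / real m"
    using ev' by eventually_elim
      (simp add: ln_entropy_lower_bound p diff_divide_distrib add_divide_distrib)
  ultimately show ?thesis
    by (simp add: tendsto_cong log_rate_def xlnx_def add.commute)
qed

lemma prob_Yhat_sum_ge_rate:
  assumes p: "0 < p" "p < 1" and b: "0 < b" "b < 1" and c: "0 < c" "c \<le> b - a" and "0 < a"
  shows "\<exists>X. X \<longlonglongrightarrow> exp (- log_rate p b c) \<and>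
    (\<forall>\<^sub>F m in sequentially.
       inverse (X m ^ m) \<le> measure_pmf.prob (Yhat_sum_pmf p m) {x. real_of_int x \<ge> a * real m})"
proof -
  define h where "h m = nat \<lceil>b * real m\<rceil>" for m
  define n where "n m = nat \<lfloor>c * real m\<rfloor>" for m
  have h_bounds: "b * real m \<le> real (h m) \<and> real (h m) \<le> b * real m + 1" for m
    unfolding h_def using b by (intro real_nat_ceiling_bounds) simp
  have n_bounds: "c * real m - 1 \<le> real (n m) \<and> real (n m) \<le> c * real m" for m
    unfolding n_def using c by (intro real_nat_floor_bounds) simp
  have gap: "a * real m \<le> real (h m) - real (n m)" for m
    using h_bounds[of m] n_bounds[of m] mult_right_mono[of c "b - a" "real m"] c
    by (simp add: algebra_simps)
  have ev: "\<forall>\<^sub>F m in sequentially. 1 \<le> h m \<and> h m \<le> m \<and> n m \<le> m"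
    using eventually_gt_at_top[of 0]
  proof eventually_elim
    case (elim m)
    have "0 < b * real m" "b * real m \<le> real m" "c * real m \<le> real m"
      using b c \<open>0 < a\<close> elim by (simp_all add: mult_left_le_one_le)
    then have "0 < real (h m)" "h m \<le> m" "real (n m) \<le> real m"
      using h_bounds[of m] n_bounds[of m] unfolding h_def
      by (linarith, simp add: ceiling_le_iff nat_le_iff, linarith)
    then show ?case by linarith
  qed
  have rate: "(\<lambda>m. ln (entropy_lower_bound p m (h m) (n m)) / real m) \<longlonglongrightarrow> log_rate p b c"
  proof (rule entropy_lower_bound_rate[OF p b c(1) _ _ ev])
    show "(\<lambda>m. real (h m) / real m) \<longlonglongrightarrow> b"
      by (intro tendsto_div_real_of_bounded_dev[where C = 1] always_eventually allI)
        (smt (verit) h_bounds)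
    show "(\<lambda>m. real (n m) / real m) \<longlonglongrightarrow> c"
      by (intro tendsto_div_real_of_bounded_dev[where C = 1] always_eventually allI)
        (smt (verit) n_bounds)
  qed
  show ?thesis
  proof (rule exponential_rate_lower_bound[OF _ rate])
    show "\<forall>\<^sub>F m in sequentially. 0 < entropy_lower_bound p m (h m) (n m) \<and>
        entropy_lower_bound p m (h m) (n m)
          \<le> measure_pmf.prob (Yhat_sum_pmf p m) {x. real_of_int x \<ge> a * real m}"
      using ev by eventually_elim
        (use p gap in \<open>simp add: entropy_lower_bound_pos entropy_lower_bound_le_prob_Yhat_sum\<close>)
  qed
qed

lemma phi_ratio_strict_mono:
  fixes a s t :: real
  assumes "0 \<le> a" "a \<le> s" "s < t" "t < 1"
  shows "(2 - s)^2 * (s - a) / (1 - s) < (2 - t)^2 * (t - a) / (1 - t)"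
proof -
  have "(1 - t) * (2 - s)^2 \<le> (1 - s) * (2 - t)^2"
  proof -
    have "(1 - s) * (2 - t)^2 - (1 - t) * (2 - s)^2 = (t - s) * (1 - (1 - s) * (1 - t))"
      by (simp add: power2_eq_square algebra_simps)
    moreover have "(1 - s) * (1 - t) \<le> 1"
      using assms by (intro mult_le_one) auto
    ultimately show ?thesis
      using assms by (smt (verit) mult_nonneg_nonneg)
  qed
  then have "(1 - t) * (2 - s)^2 * (t - a) \<le> (1 - s) * (2 - t)^2 * (t - a)"
    using assms by (intro mult_right_mono) auto
  with assms have "(1 - t) * ((2 - s)^2 * (s - a)) < (1 - s) * ((2 - t)^2 * (t - a))"
    by (smt (verit) mult.assoc mult_strict_left_mono zero_less_mult_iff zero_less_power)
  then show ?thesis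
    using assms by (simp add: divide_simps mult.commute)
qed

definition phi_poly :: "real \<Rightarrow> real \<Rightarrow> real \<Rightarrow> real" where
  "phi_poly p a s = p * (1 - p) * (2 - s)^2 * (s - a) - a * (1 - s)"

lemma phi_poly_root_unique:
  assumes p: "0 < p" "p < 1" and a: "0 < a" "a < 1"
  shows "\<exists>!s. a \<le> s \<and> s \<le> 1 \<and> phi_poly p a s = 0"
    and "a \<le> s \<Longrightarrow> s \<le> 1 \<Longrightarrow> phi_poly p a s = 0 \<Longrightarrow> a < s \<and> s < 1"
proof -
  have interior: "a < s \<and> s < 1" if "a \<le> s" "s \<le> 1" "phi_poly p a s = 0" for s
    using that a p unfolding phi_poly_def by (cases "s = a"; cases "s = 1") auto
  then show "a \<le> s \<Longrightarrow> s \<le> 1 \<Longrightarrow> phi_poly p a s = 0 \<Longrightarrow> a < s \<and> s < 1" .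
  have ratio: "(2 - s)^2 * (s - a) / (1 - s) = a / (p * (1 - p))"
    if "a \<le> s" "s \<le> 1" "phi_poly p a s = 0" for s
    using that interior[OF that] p unfolding phi_poly_def by (simp add: field_simps)
  show "\<exists>!s. a \<le> s \<and> s \<le> 1 \<and> phi_poly p a s = 0"
  proof (rule ex_ex1I)
    show "\<exists>s. a \<le> s \<and> s \<le> 1 \<and> phi_poly p a s = 0"
    proof (rule IVT')
      show "phi_poly p a a \<le> 0" "0 \<le> phi_poly p a 1" "a \<le> 1"
        using a p unfolding phi_poly_def by auto
      show "continuous_on {a..1} (phi_poly p a)"
        unfolding phi_poly_def by (intro continuous_intros)
    qed
  next
    fix s t
    assume "a \<le> s \<and> s \<le> 1 \<and> phi_poly p a s = 0" "a \<le> t \<and> t \<le> 1 \<and> phi_poly p a t = 0"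
    then show "s = t"
      using ratio interior phi_ratio_strict_mono[of a s t] phi_ratio_strict_mono[of a t s] a
      by (metis less_eq_real_def linorder_neqE_linordered_idom less_irrefl)
  qed
qed

lemma phi:
  assumes "0 < p" "p < 1" "0 < a" "a < 1"
  shows "a < phi p a" "phi p a < 1"
    and "p * (1 - p) * (2 - phi p a)^2 * (phi p a - a) = a * (1 - phi p a)"
proof -
  have "a \<le> phi p a \<and> phi p a \<le> 1 \<and> phi_poly p a (phi p a) = 0"
    unfolding phi_def phi_poly_def[symmetric] by (rule theI') (rule phi_poly_root_unique[OF assms])
  then show "a < phi p a" "phi p a < 1"
    and "p * (1 - p) * (2 - phi p a)^2 * (phi p a - a) = a * (1 - phi p a)"
    using phi_poly_root_unique(2)[OF assms] unfolding phi_poly_def by auto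
qed

lemma log_rate_half:
  assumes "0 < p" "p < 1"
  shows "log_rate p (1/2) ((1 - p) / (2 * p)) = 0"
proof -
  have "1/2 + (1 - p) / (2 * p) = 1 / (2 * p)"
    using assms by (simp add: field_simps)
  then show ?thesis
    unfolding log_rate_def xlnx_def using assms
    by (simp add: ln_div ln_mult field_simps)
qed

lemma log_rate_at_phi_root:
  assumes p: "0 < p" "p < 1" and s: "0 < a" "a < s" "s < 1"
    and root: "p * (1 - p) * (2 - s)^2 * (s - a) = a * (1 - s)"
  shows "- log_rate p (a / s) (a * (1 - s) / s)
    = ln 2 + ln ((s - a) / s) + a * ln ((1 - p) * (2 - s) / (1 - s))"
proof -
  define la ls lsa l2s l1s lq where "la = ln a" "ls = ln s" "lsa = ln (s - a)"
    "l2s = ln (2 - s)" "l1s = ln (1 - s)" "lq = ln (1 - p)"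
  note logs = la_ls_lsa_l2s_l1s_lq_def
  have ln_p: "ln p = la + l1s - lq - 2 * l2s - lsa"
  proof -
    have "ln (p * (1 - p) * (2 - s)^2 * (s - a)) = ln (a * (1 - s))"
      using root by simp
    then show ?thesis
      using p s unfolding logs by (simp add: ln_mult ln_realpow)
  qed
  have args: "1 - a / s = (s - a) / s" "a / s + a * (1 - s) / s = a * (2 - s) / s"
    using s by (auto simp: field_simps)
  have xlnx: "xlnx (a / s) = a / s * (la - ls)"
    "xlnx ((s - a) / s) = (s - a) / s * (lsa - ls)"
    "xlnx (a * (2 - s) / s) = a * (2 - s) / s * (la + l2s - ls)"
    "xlnx (a * (1 - s) / s) = a * (1 - s) / s * (la + l1s - ls)"
    using s unfolding xlnx_def logs by (simp_all add: ln_div ln_mult)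
  have rhs: "ln ((s - a) / s) = lsa - ls" "ln ((1 - p) * (2 - s) / (1 - s)) = lq + l2s - l1s"
    using p s unfolding logs by (simp_all add: ln_div ln_mult)
  show ?thesis
    unfolding log_rate_def args xlnx rhs ln_p logs(6)[symmetric] using s
    by (simp add: field_simps)
qed

lemma exp_log_rate_attains_gL:
  assumes p: "0 < p" "p < 1" and a: "0 < a" "a < 1"
  shows "\<exists>b c. 0 < b \<and> b < 1 \<and> 0 < c \<and> c \<le> b - a \<and> exp (- log_rate p b c) = 2 * gL p a"
proof (cases "p > 1/2 \<and> a < 1 - 1 / (2 * p)")
  case True
  then have "2 * gL p a = 1" "(1 - p) / (2 * p) \<le> 1/2 - a"
    using a by (auto simp: gL_def field_simps)
  then show ?thesis
    using p by (intro exI[of _ "1/2"] exI[of _ "(1 - p) / (2 * p)"]) (simp add: log_rate_half)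
next
  case False
  define s where "s = phi p a"
  have s: "a < s" "s < 1" "p * (1 - p) * (2 - s)^2 * (s - a) = a * (1 - s)"
    using phi[OF assms] unfolding s_def by auto
  have "gL p a = (s - a) / s * ((1 - p) * (2 - s) / (1 - s)) powr a"
    using False a unfolding gL_def s_def by auto
  also have "\<dots> = exp (- log_rate p (a / s) (a * (1 - s) / s)) / 2"
    unfolding log_rate_at_phi_root[OF p a(1) s] using p a s(1,2)
    by (simp add: exp_add powr_def) (simp add: field_simps)
  finally show ?thesis
    using a s by (intro exI[of _ "a / s"] exI[of _ "a * (1 - s) / s"]) (auto simp: field_simps)
qed

theorem lemma15:
  fixes p a :: real
  assumes "0 < p" "p < 1" "0 < a" "a < 1"
  shows "\<exists>\<epsilon> :: nat \<Rightarrow> real. \<epsilon> \<longlonglongrightarrow> 0 \<and>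
    (\<forall>\<^sub>F m in sequentially.
       measure_pmf.prob (Yhat_sum_pmf p m) {x. real_of_int x \<ge> a * real m}
         \<ge> inverse ((2 * gL p a - \<epsilon> m) ^ m))"
proof -
  obtain b c where bc: "0 < b" "b < 1" "0 < c" "c \<le> b - a"
    and gL: "exp (- log_rate p b c) = 2 * gL p a"
    using exp_log_rate_attains_gL[OF assms] by blast
  obtain X where X: "X \<longlonglongrightarrow> 2 * gL p a"
    and bound: "\<forall>\<^sub>F m in sequentially.
      inverse (X m ^ m) \<le> measure_pmf.prob (Yhat_sum_pmf p m) {x. real_of_int x \<ge> a * real m}"
    using prob_Yhat_sum_ge_rate[OF assms(1,2) bc assms(3)] unfolding gL by blast
  have "(\<lambda>m. 2 * gL p a - X m) \<longlonglongrightarrow> 0"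
    using tendsto_diff[OF tendsto_const X, of "2 * gL p a"] by simp
  then show ?thesis
    using bound by (intro exI[of _ "\<lambda>m. 2 * gL p a - X m"]) simp
qed

end
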